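(* Let $a\in C^\infty(\mathbb{R}^{2d}\times\mathbb{R}^d)$, $a=a(x,y,\xi)$, be real with $\partial_{y_j}a\in S^1(\mathbb{R}^{2d}\times\mathbb{R}^d)$ for $1\le j\le d$, and suppose there is $\delta\in[0,1)$ with $\|(\nabla^2_{\xi,y}a)(x,y,\xi)\|\le\delta$ for all $(x,y,\xi)$. Let $\Lambda(x,y,\xi):=\xi+(\nabla_ya)(x,y,\xi)$. Then: (1) $\Lambda\in S^1(\mathbb{R}^{2d}\times\mathbb{R}^d)$ and for each $(x,y)$ the map $\xi\mapsto\Lambda(x,y,\xi)$ is a $C^\infty$-diffeomorphism of $\mathbb{R}^d$; let $\eta\mapsto\lambda(x,y,\eta)$ be its inverse; (2) there is $C>0$ with $C^{-1}\langle\xi\rangle\le\langle\Lambda(x,y,\xi)\rangle\le C\langle\xi\rangle$ and $C^{-1}\langle\eta\rangle\le\langle\lambda(x,y,\eta)\rangle\le C\langle\eta\rangle$ for all $x,y,\xi,\eta$; (3) the components of $\lambda$ belong to $S^1(\mathbb{R}^{2d}\times\mathbb{R}^d)$; (4) the Jacobian determinant $D(x,y,\eta)$ of $\eta\mapsto\lambda(x,y,\eta)$ belongs to $S^0(\mathbb{R}^{2d}\times\mathbb{R}^d)$.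
   Context: $\langle\xi\rangle=(1+|\xi|^2)^{1/2}$. $S^m(\mathbb{R}^{2d}\times\mathbb{R}^d)$ is the space of $f\in C^\infty(\mathbb{R}^{2d}\times\mathbb{R}^d)$, $f=f(u,\xi)$ with $u=(x,y)\in\mathbb{R}^{2d}$, $\xi\in\mathbb{R}^d$, such that $|\partial_u^\alpha\partial_\xi^\beta f(u,\xi)|\le C_{\alpha\beta}\langle\xi\rangle^{m-|\beta|}$ for all multi-indices. $\nabla^2_{\xi,y}a$ is the $d\times d$ matrix $(\partial_{\xi_j}\partial_{y_k}a)$ and $\|\cdot\|$ the operator norm. *)

theory Defs
  imports "HOL-Analysis.Analysis"
begin

text \<open>Points of R^{2d} x R^d are represented as ((x,y),xi) with x,y,xi :: real^'n,
  d = CARD('n).\<close>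
type_synonym 'n pt = "((real^'n) \<times> (real^'n)) \<times> (real^'n)"

definition dpart :: "'a::euclidean_space \<Rightarrow> ('a \<Rightarrow> real) \<Rightarrow> 'a \<Rightarrow> real" where
  "dpart v f p = deriv (\<lambda>t. f (p + t *\<^sub>R v)) 0"

fun iter_part :: "'a::euclidean_space list \<Rightarrow> ('a \<Rightarrow> real) \<Rightarrow> 'a \<Rightarrow> real" where
  "iter_part [] f = f"
| "iter_part (v # vs) f = dpart v (iter_part vs f)"

definition smooth_fun :: "('a::euclidean_space \<Rightarrow> real) \<Rightarrow> bool" where
  "smooth_fun f \<longleftrightarrow> (\<forall>vs. set vs \<subseteq> Basis \<longrightarrow> (\<forall>p. iter_part vs f differentiable (at p)))"

definition smooth_map :: "(real^'n::finite \<Rightarrow> real^'n) \<Rightarrow> bool" where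
  "smooth_map g \<longleftrightarrow> (\<forall>k. smooth_fun (\<lambda>v. g v $ k))"

definition smooth_diffeo :: "(real^'n::finite \<Rightarrow> real^'n) \<Rightarrow> bool" where
  "smooth_diffeo g \<longleftrightarrow> bij g \<and> smooth_map g \<and> smooth_map (inv g)"

definition jbr :: "real^'n::finite \<Rightarrow> real" where
  "jbr v = sqrt (1 + (norm v)\<^sup>2)"

text \<open>The xi-directions are the basis vectors ((0,0),e).\<close>
definition symb :: "real \<Rightarrow> (('n::finite) pt \<Rightarrow> real) \<Rightarrow> bool" where
  "symb m f \<longleftrightarrow> smooth_fun f \<and>
     (\<forall>vs. set vs \<subseteq> Basis \<longrightarrow>
        (\<exists>C. \<forall>p. \<bar>iter_part vs f p\<bar> \<le>
                 C * jbr (snd p) powr (m - real (length (filter (\<lambda>v. fst v = 0) vs)))))"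

definition dy :: "'n::finite \<Rightarrow> (('n::finite) pt \<Rightarrow> real) \<Rightarrow> 'n pt \<Rightarrow> real" where
  "dy k f = dpart ((0, axis k 1), 0) f"

definition dxi :: "'n::finite \<Rightarrow> (('n::finite) pt \<Rightarrow> real) \<Rightarrow> 'n pt \<Rightarrow> real" where
  "dxi j f = dpart ((0, 0), axis j 1) f"

definition hess_xi_y :: "(('n::finite) pt \<Rightarrow> real) \<Rightarrow> 'n pt \<Rightarrow> real^'n^'n" where
  "hess_xi_y a p = (\<chi> j k. dxi j (dy k a) p)"

definition Lam :: "(('n::finite) pt \<Rightarrow> real) \<Rightarrow> 'n pt \<Rightarrow> real^'n" where
  "Lam a p = snd p + (\<chi> k. dy k a p)"

definition lam :: "(('n::finite) pt \<Rightarrow> real) \<Rightarrow> 'n pt \<Rightarrow> real^'n" where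
  "lam a p = inv (\<lambda>xi. Lam a (fst p, xi)) (snd p)"

definition jac_lam :: "(('n::finite) pt \<Rightarrow> real) \<Rightarrow> 'n pt \<Rightarrow> real" where
  "jac_lam a p = det (\<chi> i j. dxi j (\<lambda>q. lam a q $ i) p)"

end

theory Submission
  imports Defs
begin

text \<open>
  For fixed \<open>(x, y)\<close> the map \<open>\<xi> \<mapsto> \<Lambda>(x, y, \<xi>) - \<xi> = \<nabla>\<^sub>ya(x, y, \<xi>)\<close> has derivative
  \<open>(\<nabla>\<^sup>2\<^sub>\<xi>\<^sub>,\<^sub>ya)\<^sup>T\<close> of norm at most \<open>\<delta> < 1\<close>, so it is a contraction: by the Banach fixed point
  theorem \<open>\<xi> \<mapsto> \<Lambda>(x, y, \<xi>)\<close> is a bi-Lipschitz bijection, and \<open>\<langle>\<Lambda>\<rangle>\<close>, \<open>\<langle>\<xi>\<rangle>\<close> and \<open>\<langle>\<lambda>\<rangle>\<close>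
  are uniformly comparable.  The \<open>\<xi>\<close>-Jacobian \<open>J = I + (\<nabla>\<^sup>2\<^sub>\<xi>\<^sub>,\<^sub>ya)\<^sup>T\<close> has entries in \<open>S\<^sup>0\<close>
  and \<open>|det J|\<close> is bounded below, so by Cramer's rule \<open>J\<^sup>-\<^sup>1\<close> has entries in \<open>S\<^sup>0\<close>.

  The inverse \<open>\<Phi>(x, y, \<eta>) = (x, y, \<lambda>(x, y, \<eta>))\<close> of \<open>(x, y, \<xi>) \<mapsto> (x, y, \<Lambda>)\<close> has
  derivative \<open>M \<circ> \<Phi>\<close>, where the coefficients of \<open>M\<close> are symbols built from \<open>J\<^sup>-\<^sup>1\<close> and
  \<open>\<nabla>\<^sub>x\<^sub>,\<^sub>y\<Lambda>\<close>.  Hence every first derivative of \<open>G \<circ> \<Phi>\<close> is again of the form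
  \<open>G' \<circ> \<Phi>\<close> with \<open>G'\<close> a symbol of the right order, and a coinduction on the symbol classes
  shows that composition with \<open>\<Phi>\<close> preserves them.  Applied to \<open>G = \<xi>\<^sub>k\<close> and to
  \<open>G = det J\<^sup>-\<^sup>1\<close> this gives \<open>\<lambda> \<in> S\<^sup>1\<close> and \<open>D \<in> S\<^sup>0\<close>.
\<close>

section \<open>Directional derivatives\<close>

lemma dpart_eq_derivative:
  assumes "(f has_derivative f') (at p)"
  shows "dpart v f p = f' v"
proof -
  have "((\<lambda>t::real. p + t *\<^sub>R v) has_derivative (\<lambda>t. t *\<^sub>R v)) (at 0)"
    by (auto intro!: derivative_eq_intros)
  then have "((\<lambda>t. f (p + t *\<^sub>R v)) has_derivative (\<lambda>t. f' (t *\<^sub>R v))) (at 0)"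
    using has_derivative_compose assms by fastforce
  moreover have "(\<lambda>t. f' (t *\<^sub>R v)) = (*) (f' v)"
    using assms has_derivative_linear linear_scale by (fastforce simp: mult.commute)
  ultimately have "((\<lambda>t. f (p + t *\<^sub>R v)) has_field_derivative f' v) (at 0)"
    by (simp add: has_field_derivative_def)
  then show ?thesis
    unfolding dpart_def by (rule DERIV_imp_deriv)
qed

lemma iter_part_snoc: "iter_part (vs @ [v]) f = iter_part vs (dpart v f)"
  by (induction vs) auto

lemma dpart_const [simp]: "dpart v (\<lambda>q. c) = (\<lambda>q. 0)"
  by (rule ext, rule dpart_eq_derivative[of _ "\<lambda>_. 0", simplified]) simp

lemma dpart_add:
  assumes "f differentiable (at p)" "g differentiable (at p)"
  shows "dpart v (\<lambda>q. f q + g q) p = dpart v f p + dpart v g p"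
proof -
  obtain f' g' where f': "(f has_derivative f') (at p)" and g': "(g has_derivative g') (at p)"
    using assms unfolding differentiable_def by blast
  show ?thesis
    using dpart_eq_derivative[OF has_derivative_add[OF f' g']]
      dpart_eq_derivative[OF f'] dpart_eq_derivative[OF g'] by simp
qed

lemma dpart_mult:
  assumes "f differentiable (at p)" "g differentiable (at p)"
  shows "dpart v (\<lambda>q. f q * g q) p = dpart v f p * g p + f p * dpart v g p"
proof -
  obtain f' g' where f': "(f has_derivative f') (at p)" and g': "(g has_derivative g') (at p)"
    using assms unfolding differentiable_def by blast
  show ?thesis
    using dpart_eq_derivative[OF has_derivative_mult[OF f' g']]
      dpart_eq_derivative[OF f'] dpart_eq_derivative[OF g'] by simp
qed

lemma differentiable_sum_list:
  assumes "\<And>f. f \<in> set fs \<Longrightarrow> f differentiable (at p)"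
  shows "(\<lambda>q. \<Sum>f\<leftarrow>fs. f q) differentiable (at p)"
  using assms by (induction fs) auto

lemma dpart_sum_list:
  assumes "\<And>f. f \<in> set fs \<Longrightarrow> f differentiable (at p)"
  shows "dpart v (\<lambda>q. \<Sum>f\<leftarrow>fs. f q) p = (\<Sum>f\<leftarrow>fs. dpart v f p)"
  using assms
proof (induction fs)
  case (Cons f fs)
  then show ?case
    using dpart_add[of f p "\<lambda>q. \<Sum>f\<leftarrow>fs. f q"] differentiable_sum_list[of fs p] by simp
qed simp

lemma dpart_compose_real:
  assumes "(\<phi> has_real_derivative d) (at (g p))" "g differentiable (at p)"
  shows "dpart v (\<lambda>q. \<phi> (g q)) p = d * dpart v g p"
proof -
  obtain g' where g': "(g has_derivative g') (at p)"
    using assms(2) unfolding differentiable_def by blast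
  have "((\<lambda>q. \<phi> (g q)) has_derivative (\<lambda>h. d * g' h)) (at p)"
    using has_derivative_compose[OF g'] assms(1) by (simp add: has_field_derivative_def)
  then show ?thesis
    using dpart_eq_derivative[OF g'] dpart_eq_derivative by metis
qed

lemma dpart_inverse_power:
  fixes g :: "'a::euclidean_space \<Rightarrow> real"
  assumes "g differentiable (at p)" "g p \<noteq> 0"
  shows "dpart v (\<lambda>q. inverse (g q) ^ k) p = - real k * inverse (g p) ^ Suc k * dpart v g p"
proof (rule dpart_compose_real[OF _ assms(1)])
  have "((\<lambda>x. inverse x ^ k) has_real_derivative
      real k * inverse (g p) ^ (k - 1) * - inverse (g p ^ 2)) (at (g p))"
    using assms(2) by (auto intro!: derivative_eq_intros simp: power2_eq_square)
  moreover have "real k * inverse (g p) ^ (k - 1) * - inverse (g p ^ 2) = - real k * inverse (g p) ^ Suc k"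
    using assms(2) by (cases k) (auto simp: power2_eq_square field_simps)
  ultimately show "((\<lambda>x. inverse x ^ k) has_real_derivative - real k * inverse (g p) ^ Suc k) (at (g p))"
    by metis
qed

lemma dpart_compose:
  fixes \<Phi> :: "'a::euclidean_space \<Rightarrow> 'b::euclidean_space"
  assumes "(\<Phi> has_derivative \<Phi>') (at p)" "G differentiable (at (\<Phi> p))"
  shows "dpart b (\<lambda>p. G (\<Phi> p)) p = (\<Sum>c\<in>Basis. (\<Phi>' b \<bullet> c) * dpart c G (\<Phi> p))"
proof -
  obtain G' where G': "(G has_derivative G') (at (\<Phi> p))"
    using assms(2) unfolding differentiable_def by blast
  interpret G': linear G'
    using G' has_derivative_linear by blast
  have "dpart b (\<lambda>p. G (\<Phi> p)) p = G' (\<Phi>' b)"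
    using dpart_eq_derivative[OF has_derivative_compose[OF assms(1) G']] .
  also have "\<dots> = G' (\<Sum>c\<in>Basis. (\<Phi>' b \<bullet> c) *\<^sub>R c)"
    by (simp add: euclidean_representation)
  also have "\<dots> = (\<Sum>c\<in>Basis. (\<Phi>' b \<bullet> c) * dpart c G (\<Phi> p))"
    by (simp add: G'.sum G'.scale dpart_eq_derivative[OF G'])
  finally show ?thesis .
qed

lemma dpart_xi_component: "dpart b (\<lambda>q::('n::finite) pt. snd q $ k) = (\<lambda>q. snd b $ k)"
proof -
  have "bounded_linear (\<lambda>q::'n pt. snd q $ k)"
    by (rule bounded_linear_compose[OF bounded_linear_vec_nth bounded_linear_snd])
  then have "((\<lambda>q::'n pt. snd q $ k) has_derivative (\<lambda>q. snd q $ k)) (at p)" for p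
    by (rule bounded_linear_imp_has_derivative)
  then show ?thesis
    using dpart_eq_derivative by fast
qed

lemma has_derivative_vec_lambda:
  fixes f :: "'n::finite \<Rightarrow> 'a::real_normed_vector \<Rightarrow> real"
  assumes "\<And>l. (f l has_derivative f' l) (at q)"
  shows "((\<lambda>q. \<chi> l. f l q) has_derivative (\<lambda>v. \<chi> l. f' l v)) (at q)"
proof -
  have expand: "(\<chi> l. g l) = (\<Sum>l\<in>UNIV. g l *\<^sub>R axis l (1::real))" for g :: "'n \<Rightarrow> real"
    using basis_expansion[of "\<chi> l. g l"] by (simp add: scalar_mult_eq_scaleR)
  have "((\<lambda>q. \<Sum>l\<in>UNIV. f l q *\<^sub>R axis l 1) has_derivative (\<lambda>v. \<Sum>l\<in>UNIV. f' l v *\<^sub>R axis l 1)) (at q)"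
    by (intro has_derivative_sum has_derivative_scaleR_left assms)
  then show ?thesis
    by (subst (1 2) expand)
qed

section \<open>Symbol classes\<close>

lemma jbr_ge_1: "1 \<le> jbr v"
  unfolding jbr_def by simp

lemma jbr_pos: "0 < jbr v"
  using jbr_ge_1[of v] by linarith

lemma norm_le_jbr: "norm v \<le> jbr v"
  unfolding jbr_def by (simp add: real_le_rsqrt)

lemma jbr_le_1_plus_norm: "jbr v \<le> 1 + norm v"
  unfolding jbr_def by (rule real_le_lsqrt) (auto simp: power2_eq_square algebra_simps)

definition xi_weight :: "('n::finite) pt \<Rightarrow> real" where
  "xi_weight b = of_bool (fst b = 0)"

lemma pt_Basis_cases:
  fixes b :: "('n::finite) pt"
  assumes "b \<in> Basis"
  obtains (xy) bu where "bu \<in> Basis" "b = (bu, 0)" | (xi) j where "b = (0, axis j 1)"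
proof -
  have "b \<in> (\<lambda>u. (u, 0)) ` Basis \<union> (\<lambda>v. (0, v)) ` (Basis :: (real^'n) set)"
    using assms by (simp add: Basis_prod_def)
  then show thesis
    using that by (auto simp: Basis_vec_def)
qed

lemma xi_weight_xy: "bu \<in> Basis \<Longrightarrow> xi_weight (bu, 0) = 0"
  by (auto simp: xi_weight_def nonzero_Basis)

lemma xi_weight_xi: "xi_weight (0, v) = 1"
  by (simp add: xi_weight_def)

lemma symb_coinduct:
  fixes f :: "('n::finite) pt \<Rightarrow> real"
  assumes "P m f"
    and step: "\<And>m f. P m f \<Longrightarrow> (\<forall>p. f differentiable (at p))
        \<and> (\<exists>C. \<forall>p. \<bar>f p\<bar> \<le> C * jbr (snd p) powr m)
        \<and> (\<forall>b\<in>Basis. P (m - xi_weight b) (dpart b f))"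
  shows "symb m f"
proof -
  have *: "set vs \<subseteq> Basis \<Longrightarrow> P m f \<Longrightarrow> (\<forall>p. iter_part vs f differentiable (at p)) \<and>
        (\<exists>C. \<forall>p. \<bar>iter_part vs f p\<bar>
           \<le> C * jbr (snd p) powr (m - real (length (filter (\<lambda>v. fst v = 0) vs))))"
    for vs :: "'n pt list" and m f
  proof (induction vs arbitrary: m f rule: rev_induct)
    case Nil
    then show ?case using step by simp
  next
    case (snoc b vs)
    then have b: "b \<in> Basis" and vs: "set vs \<subseteq> Basis" by auto
    have "P (m - xi_weight b) (dpart b f)"
      using step[OF snoc.prems(2)] b by blast
    from snoc.IH[OF vs this] show ?case
      by (cases "fst b = 0") (simp_all add: iter_part_snoc xi_weight_def algebra_simps)
  qed
  show ?thesis
    unfolding symb_def smooth_fun_def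
  proof (intro conjI allI impI)
    fix vs :: "'n pt list" and p
    assume "set vs \<subseteq> Basis"
    then show "iter_part vs f differentiable (at p)"
      using *[OF _ assms(1)] by blast
  next
    fix vs :: "'n pt list"
    assume "set vs \<subseteq> Basis"
    then show "\<exists>C. \<forall>p. \<bar>iter_part vs f p\<bar>
        \<le> C * jbr (snd p) powr (m - real (length (filter (\<lambda>v. fst v = 0) vs)))"
      using *[OF _ assms(1)] by blast
  qed
qed

lemma symb_differentiable: "symb m f \<Longrightarrow> f differentiable (at p)"
  unfolding symb_def smooth_fun_def by (metis iter_part.simps(1) empty_subsetI set_empty)

lemma symb_bounded:
  assumes "symb m f"
  obtains C where "C \<ge> 0" "\<And>p. \<bar>f p\<bar> \<le> C * jbr (snd p) powr m"
proof -
  obtain C where C: "\<forall>p. \<bar>f p\<bar> \<le> C * jbr (snd p) powr m"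
    using assms[unfolded symb_def, THEN conjunct2, rule_format, of "[]"] by auto
  have "\<bar>f p\<bar> \<le> \<bar>C\<bar> * jbr (snd p) powr m" for p
    using C order_trans[OF _ mult_right_mono[OF abs_ge_self powr_ge_zero]] by blast
  then show thesis
    using that[of "\<bar>C\<bar>"] by simp
qed

lemma symb_dpart:
  assumes f: "symb m f" and b: "b \<in> Basis"
  shows "symb (m - xi_weight b) (dpart b f)"
  unfolding symb_def smooth_fun_def
proof (intro conjI allI impI)
  fix vs :: "'a pt list" and p
  assume "set vs \<subseteq> Basis"
  then have "set (vs @ [b]) \<subseteq> Basis" using b by simp
  then have "iter_part (vs @ [b]) f differentiable at p"
    using f unfolding symb_def smooth_fun_def by blast
  then show "iter_part vs (dpart b f) differentiable at p"
    by (simp only: iter_part_snoc)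
next
  fix vs :: "'a pt list"
  let ?n = "\<lambda>vs. real (length (filter (\<lambda>v. fst v = 0) vs))"
  assume "set vs \<subseteq> Basis"
  then have "set (vs @ [b]) \<subseteq> Basis" using b by simp
  then have "\<exists>C. \<forall>p. \<bar>iter_part (vs @ [b]) f p\<bar> \<le> C * jbr (snd p) powr (m - ?n (vs @ [b]))"
    using f unfolding symb_def by blast
  moreover have "m - ?n (vs @ [b]) = m - xi_weight b - ?n vs"
    by (cases "fst b = 0") (simp_all add: xi_weight_def)
  ultimately show "\<exists>C. \<forall>p. \<bar>iter_part vs (dpart b f) p\<bar> \<le> C * jbr (snd p) powr (m - xi_weight b - ?n vs)"
    by (simp only: iter_part_snoc)
qed

lemma symbI:
  fixes f :: "('n::finite) pt \<Rightarrow> real"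
  assumes "\<And>p. f differentiable (at p)" "\<And>p. \<bar>f p\<bar> \<le> C * jbr (snd p) powr m"
    and "\<And>b. b \<in> Basis \<Longrightarrow> symb (m - xi_weight b) (dpart b f)"
  shows "symb m f"
proof (rule symb_coinduct[where P = "\<lambda>m' f'. (m', f') = (m, f) \<or> symb m' f'"])
  fix m' and f' :: "'n pt \<Rightarrow> real"
  assume "(m', f') = (m, f) \<or> symb m' f'"
  then show "(\<forall>p. f' differentiable (at p)) \<and> (\<exists>C. \<forall>p. \<bar>f' p\<bar> \<le> C * jbr (snd p) powr m')
      \<and> (\<forall>b\<in>Basis. (m' - xi_weight b, dpart b f') = (m, f) \<or> symb (m' - xi_weight b) (dpart b f'))"
    using assms symb_differentiable symb_dpart by (metis prod.inject symb_bounded)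
qed simp

definition sum_of :: "(('a \<Rightarrow> real) \<Rightarrow> bool) \<Rightarrow> ('a \<Rightarrow> real) \<Rightarrow> bool" where
  "sum_of Q h \<longleftrightarrow> (\<exists>fs. (\<forall>f\<in>set fs. Q f) \<and> h = (\<lambda>p. \<Sum>f\<leftarrow>fs. f p))"

lemma sum_of_single: "Q f \<Longrightarrow> sum_of Q f"
  unfolding sum_of_def by (intro exI[of _ "[f]"]) auto

lemma sum_of_add: "Q f \<Longrightarrow> Q g \<Longrightarrow> sum_of Q (\<lambda>p. f p + g p)"
  unfolding sum_of_def by (intro exI[of _ "[f, g]"]) auto

lemma bounded_sum_list:
  fixes w :: "'a \<Rightarrow> real"
  assumes "\<And>f. f \<in> set fs \<Longrightarrow> \<exists>C. \<forall>p. \<bar>f p\<bar> \<le> C * w p"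
  shows "\<exists>C. \<forall>p. \<bar>\<Sum>f\<leftarrow>fs. f p\<bar> \<le> C * w p"
  using assms
proof (induction fs)
  case Nil
  show ?case by (intro exI[of _ 0]) simp
next
  case (Cons f fs)
  then obtain C0 where C0: "\<forall>p. \<bar>\<Sum>f\<leftarrow>fs. f p\<bar> \<le> C0 * w p"
    by auto
  obtain C1 where C1: "\<forall>p. \<bar>f p\<bar> \<le> C1 * w p"
    using Cons.prems by (meson list.set_intros(1))
  have "\<bar>\<Sum>f\<leftarrow>f # fs. f p\<bar> \<le> (C1 + C0) * w p" for p
    using abs_triangle_ineq[of "f p" "\<Sum>f\<leftarrow>fs. f p"] C0[rule_format, of p] C1[rule_format, of p]
    by (simp add: distrib_right)
  then show ?case by blast
qed

lemma sum_of_dpart_sum_list: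
  assumes "\<And>f p. f \<in> set fs \<Longrightarrow> f differentiable (at p)"
    and "\<And>f. f \<in> set fs \<Longrightarrow> sum_of Q (dpart b f)"
  shows "sum_of Q (dpart b (\<lambda>p. \<Sum>f\<leftarrow>fs. f p))"
proof -
  obtain gs where gs: "\<And>f. f \<in> set fs \<Longrightarrow> \<forall>g\<in>set (gs f). Q g"
    "\<And>f. f \<in> set fs \<Longrightarrow> dpart b f = (\<lambda>p. \<Sum>g\<leftarrow>gs f. g p)"
    using assms(2) bchoice[of "set fs"] unfolding sum_of_def by metis
  have "dpart b (\<lambda>p. \<Sum>f\<leftarrow>fs. f p) p = (\<Sum>g\<leftarrow>concat (map gs fs). g p)" for p
  proof -
    have "dpart b (\<lambda>p. \<Sum>f\<leftarrow>fs. f p) p = (\<Sum>f\<leftarrow>fs. dpart b f p)"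
      by (rule dpart_sum_list) (rule assms(1))
    also have "\<dots> = (\<Sum>f\<leftarrow>fs. \<Sum>g\<leftarrow>gs f. g p)"
      by (rule arg_cong[where f = sum_list], rule map_cong) (simp_all add: gs(2))
    also have "\<dots> = (\<Sum>g\<leftarrow>concat (map gs fs). g p)"
      by (induction fs) auto
    finally show ?thesis .
  qed
  moreover have "\<forall>g\<in>set (concat (map gs fs)). Q g"
    using gs(1) by auto
  ultimately show ?thesis
    unfolding sum_of_def by blast
qed

text \<open>Coinduction up to finite sums, needed because derivatives of products are sums.\<close>

lemma symb_coinduct_sum:
  fixes P :: "real \<Rightarrow> (('n::finite) pt \<Rightarrow> real) \<Rightarrow> bool"
  assumes step: "\<And>m f. P m f \<Longrightarrow> (\<forall>p. f differentiable (at p))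
        \<and> (\<exists>C. \<forall>p. \<bar>f p\<bar> \<le> C * jbr (snd p) powr m)
        \<and> (\<forall>b\<in>Basis. sum_of (P (m - xi_weight b)) (dpart b f))"
    and "sum_of (P m) f"
  shows "symb m f"
proof (rule symb_coinduct[where P = "\<lambda>m. sum_of (P m)"])
  fix m and h :: "'n pt \<Rightarrow> real"
  assume "sum_of (P m) h"
  then obtain fs where fs: "\<And>f. f \<in> set fs \<Longrightarrow> P m f" and h: "h = (\<lambda>p. \<Sum>f\<leftarrow>fs. f p)"
    unfolding sum_of_def by blast
  have diff: "f differentiable (at p)" if "f \<in> set fs" for f p
    using step[OF fs[OF that]] by blast
  have "\<forall>p. h differentiable (at p)"
    unfolding h using differentiable_sum_list[OF diff] by blast
  moreover have "\<exists>C. \<forall>p. \<bar>h p\<bar> \<le> C * jbr (snd p) powr m"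
    unfolding h
  proof (rule bounded_sum_list)
    fix f
    assume "f \<in> set fs"
    from step[OF fs[OF this]] show "\<exists>C. \<forall>p. \<bar>f p\<bar> \<le> C * jbr (snd p) powr m"
      by blast
  qed
  moreover have "sum_of (P (m - xi_weight b)) (dpart b h)" if "b \<in> Basis" for b
    unfolding h using diff step fs that by (intro sum_of_dpart_sum_list) blast+
  ultimately show "(\<forall>p. h differentiable (at p)) \<and> (\<exists>C. \<forall>p. \<bar>h p\<bar> \<le> C * jbr (snd p) powr m)
      \<and> (\<forall>b\<in>Basis. sum_of (P (m - xi_weight b)) (dpart b h))"
    by blast
qed (fact assms(2))

lemma symb_add:
  fixes f :: "('n::finite) pt \<Rightarrow> real"
  assumes "symb m f" "symb m g"
  shows "symb m (\<lambda>p. f p + g p)"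
proof (rule symb_coinduct_sum[where P = symb])
  fix m and h :: "'n pt \<Rightarrow> real"
  assume h: "symb m h"
  then obtain C where "\<forall>p. \<bar>h p\<bar> \<le> C * jbr (snd p) powr m"
    by (metis symb_bounded)
  moreover have "sum_of (symb (m - xi_weight b)) (dpart b h)" if "b \<in> Basis" for b
    by (rule sum_of_single) (rule symb_dpart[OF h that])
  ultimately show "(\<forall>p. h differentiable (at p)) \<and> (\<exists>C. \<forall>p. \<bar>h p\<bar> \<le> C * jbr (snd p) powr m)
      \<and> (\<forall>b\<in>Basis. sum_of (symb (m - xi_weight b)) (dpart b h))"
    using symb_differentiable[OF h] by blast
qed (rule sum_of_add; fact assms)

lemma symb_mult:
  fixes f :: "('n::finite) pt \<Rightarrow> real"
  assumes "symb m1 f" "symb m2 g"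
  shows "symb (m1 + m2) (\<lambda>p. f p * g p)"
proof -
  let ?Q = "\<lambda>m h. \<exists>m1 f g. symb m1 f \<and> symb (m - m1) g \<and> h = (\<lambda>p. f p * g p)"
  show ?thesis
proof (rule symb_coinduct_sum[where P = ?Q])
  fix m and h :: "'n pt \<Rightarrow> real"
  assume "?Q m h"
  then obtain m1 f g where f: "symb m1 f" and g: "symb (m - m1) g" and h: "h = (\<lambda>p. f p * g p)"
    by blast
  obtain C1 C2 where "C1 \<ge> 0" "C2 \<ge> 0" and C1: "\<And>p. \<bar>f p\<bar> \<le> C1 * jbr (snd p) powr m1"
    and C2: "\<And>p. \<bar>g p\<bar> \<le> C2 * jbr (snd p) powr (m - m1)"
    using symb_bounded[OF f] symb_bounded[OF g] by metis
  have "\<bar>h p\<bar> \<le> (C1 * C2) * jbr (snd p) powr m" for p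
  proof -
    have "\<bar>h p\<bar> \<le> (C1 * jbr (snd p) powr m1) * (C2 * jbr (snd p) powr (m - m1))"
      unfolding h abs_mult by (rule mult_mono[OF C1 C2]) (simp_all add: \<open>C1 \<ge> 0\<close>)
    then show ?thesis
      by (simp add: mult_ac flip: powr_add)
  qed
  moreover have deriv: "sum_of (?Q (m - xi_weight b)) (dpart b h)" if b: "b \<in> Basis" for b
  proof -
    have "dpart b h = (\<lambda>p. dpart b f p * g p + f p * dpart b g p)"
      unfolding h by (rule ext) (simp add: dpart_mult symb_differentiable[OF f] symb_differentiable[OF g])
    moreover have "symb (m - xi_weight b - m1) (dpart b g)"
      using symb_dpart[OF g b] by (simp add: algebra_simps)
    moreover have "?Q (m - xi_weight b) (\<lambda>p. dpart b f p * g p)"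
      by (rule exI[of _ "m1 - xi_weight b"], rule exI[of _ "dpart b f"], rule exI[of _ g])
        (simp add: symb_dpart[OF f b] g)
    moreover have "?Q (m - xi_weight b) (\<lambda>p. f p * dpart b g p)"
      by (rule exI[of _ m1], rule exI[of _ f], rule exI[of _ "dpart b g"])
        (simp add: f \<open>symb (m - xi_weight b - m1) (dpart b g)\<close>)
    ultimately show ?thesis
      by (simp only: sum_of_add)
  qed
  moreover have "\<forall>p. h differentiable (at p)"
    unfolding h using symb_differentiable[OF f] symb_differentiable[OF g] by simp
  ultimately show "(\<forall>p. h differentiable (at p)) \<and> (\<exists>C. \<forall>p. \<bar>h p\<bar> \<le> C * jbr (snd p) powr m)
      \<and> (\<forall>b\<in>Basis. sum_of (?Q (m - xi_weight b)) (dpart b h))"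
    by (intro conjI ballI deriv) blast+
qed (rule sum_of_single, rule exI[of _ m1], rule exI[of _ f], rule exI[of _ g], use assms in simp)
qed

lemma symb_zero: "symb m (\<lambda>p::('n::finite) pt. 0)"
  by (rule symb_coinduct[where P = "\<lambda>m f. f = (\<lambda>p. 0)"]) (auto intro!: exI[of _ 0])

lemma symb_const:
  assumes "m \<ge> 0"
  shows "symb m (\<lambda>p::('n::finite) pt. c)"
proof (rule symbI)
  show "\<bar>c\<bar> \<le> \<bar>c\<bar> * jbr (snd p) powr m" for p :: "'n pt"
    using ge_one_powr_ge_zero[OF jbr_ge_1 assms, of "snd p"] by (simp add: mult_le_cancel_left1)
qed (simp_all add: symb_zero)

lemma symb_scale: "symb m f \<Longrightarrow> symb m (\<lambda>p. c * f p)"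
  using symb_mult[OF symb_const[of 0 c]] by simp

lemma symb_sum:
  fixes F :: "'i \<Rightarrow> ('n::finite) pt \<Rightarrow> real"
  assumes "finite A" "\<And>i. i \<in> A \<Longrightarrow> symb m (F i)"
  shows "symb m (\<lambda>p. \<Sum>i\<in>A. F i p)"
  using assms by (induction A rule: finite_induct) (simp_all add: symb_zero symb_add)

lemma symb_prod:
  fixes F :: "'i \<Rightarrow> ('n::finite) pt \<Rightarrow> real"
  assumes "finite A" "\<And>i. i \<in> A \<Longrightarrow> symb 0 (F i)"
  shows "symb 0 (\<lambda>p. \<Prod>i\<in>A. F i p)"
  using assms
proof (induction A rule: finite_induct)
  case (insert i A)
  then show ?case using symb_mult[of 0 "F i" 0] by simp
qed (simp add: symb_const)

lemma symb_det:
  fixes M :: "('n::finite) pt \<Rightarrow> real^'k::finite^'k"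
  assumes "\<And>i j. symb 0 (\<lambda>p. M p $ i $ j)"
  shows "symb 0 (\<lambda>p. det (M p))"
  unfolding det_def by (rule symb_sum) (auto intro!: symb_scale symb_prod assms)

lemma dpart_mult_inverse_power:
  assumes "f differentiable (at p)" "g differentiable (at p)" "g p \<noteq> 0"
  shows "dpart v (\<lambda>q. f q * inverse (g q) ^ k) p
    = dpart v f p * inverse (g p) ^ k + (- real k * f p * dpart v g p) * inverse (g p) ^ Suc k"
  using assms by (simp add: dpart_mult dpart_inverse_power)

lemma abs_mult_inverse_power_le:
  fixes x y B c :: real
  assumes "\<bar>x\<bar> \<le> B" "0 < c" "c \<le> \<bar>y\<bar>"
  shows "\<bar>x * inverse y ^ k\<bar> \<le> B * inverse c ^ k"
proof -
  have "\<bar>inverse y ^ k\<bar> \<le> inverse c ^ k"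
    unfolding power_abs abs_inverse using assms(2,3) by (intro power_mono le_imp_inverse_le) auto
  moreover have "0 \<le> B"
    using assms(1) by linarith
  ultimately show ?thesis
    unfolding abs_mult using assms(1) by (simp add: mult_mono)
qed

lemma symb_mult_inverse_power:
  fixes g :: "('n::finite) pt \<Rightarrow> real"
  assumes g: "symb 0 g" and c: "c > 0" "\<And>p. c \<le> \<bar>g p\<bar>"
    and "symb m f"
  shows "symb m (\<lambda>p. f p * inverse (g p) ^ k)"
proof -
  let ?Q = "\<lambda>m h. \<exists>f k. symb m f \<and> h = (\<lambda>p. f p * inverse (g p) ^ k)"
  show ?thesis
proof (rule symb_coinduct_sum[where P = ?Q])
  fix m and h :: "'n pt \<Rightarrow> real"
  assume "?Q m h"
  then obtain f k where f: "symb m f" and h: "h = (\<lambda>p. f p * inverse (g p) ^ k)"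
    by blast
  have g_nz: "g p \<noteq> 0" for p
    using c by (metis abs_zero not_le)
  obtain C where C: "\<And>p. \<bar>f p\<bar> \<le> C * jbr (snd p) powr m"
    using symb_bounded[OF f] by metis
  have "\<bar>h p\<bar> \<le> (C * inverse c ^ k) * jbr (snd p) powr m" for p
    using abs_mult_inverse_power_le[OF C c(1,2)] by (simp add: h mult_ac)
  then have "\<exists>C. \<forall>p. \<bar>h p\<bar> \<le> C * jbr (snd p) powr m"
    by blast
  moreover have deriv: "sum_of (?Q (m - xi_weight b)) (dpart b h)" if b: "b \<in> Basis" for b
  proof -
    have "symb (m + (0 - xi_weight b)) (\<lambda>p. f p * dpart b g p)"
      by (rule symb_mult[OF f symb_dpart[OF g b]])
    from symb_scale[OF this, of "- real k"]
    have "symb (m - xi_weight b) (\<lambda>p. - real k * f p * dpart b g p)"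
      by (simp only: mult.assoc diff_0 add_uminus_conv_diff)
    moreover have "dpart b h = (\<lambda>p. dpart b f p * inverse (g p) ^ k
        + (- real k * f p * dpart b g p) * inverse (g p) ^ Suc k)"
      unfolding h by (rule ext, rule dpart_mult_inverse_power)
        (simp_all add: symb_differentiable[OF f] symb_differentiable[OF g] g_nz)
    moreover have "?Q (m - xi_weight b) (\<lambda>p. dpart b f p * inverse (g p) ^ k)"
      by (rule exI[of _ "dpart b f"], rule exI[of _ k]) (simp add: symb_dpart[OF f b])
    moreover have "?Q (m - xi_weight b) (\<lambda>p. (- real k * f p * dpart b g p) * inverse (g p) ^ Suc k)"
      by (rule exI[of _ "\<lambda>p. - real k * f p * dpart b g p"], rule exI[of _ "Suc k"], rule conjI[OF _ refl])
        fact
    ultimately show ?thesis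
      by (simp only: sum_of_add)
  qed
  moreover have "\<forall>p. h differentiable (at p)"
    unfolding h using symb_differentiable[OF f] symb_differentiable[OF g] g_nz by simp
  ultimately show "(\<forall>p. h differentiable (at p)) \<and> (\<exists>C. \<forall>p. \<bar>h p\<bar> \<le> C * jbr (snd p) powr m)
      \<and> (\<forall>b\<in>Basis. sum_of (?Q (m - xi_weight b)) (dpart b h))"
    by (intro conjI ballI deriv) blast+
qed (rule sum_of_single, rule exI[of _ f], rule exI[of _ k], use assms in simp)
qed

lemma symb_inverse:
  fixes g :: "('n::finite) pt \<Rightarrow> real"
  assumes "symb 0 g" "c > 0" "\<And>p. c \<le> \<bar>g p\<bar>"
  shows "symb 0 (\<lambda>p. inverse (g p))"
  using symb_mult_inverse_power[OF assms symb_const[of 0 1], of 1] by simp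

lemma symb_xi_component: "symb 1 (\<lambda>q::('n::finite) pt. snd q $ k)"
proof (rule symbI)
  show "(\<lambda>q. snd q $ k) differentiable (at p)" for p :: "'n pt"
    using bounded_linear_imp_differentiable[OF
        bounded_linear_compose[OF bounded_linear_vec_nth bounded_linear_snd]] by blast
  show "\<bar>snd p $ k\<bar> \<le> 1 * jbr (snd p) powr 1" for p :: "'n pt"
    using component_le_norm_cart[of "snd p" k] norm_le_jbr[of "snd p"] jbr_pos[of "snd p"] by simp
  show "symb (1 - xi_weight b) (dpart b (\<lambda>q. snd q $ k))" if "b \<in> Basis" for b :: "'n pt"
  proof (cases "fst b = 0")
    case True
    then show ?thesis by (simp add: dpart_xi_component xi_weight_def symb_const)
  next
    case False
    then have "snd b = 0" using that by (auto simp: Basis_prod_def)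
    then show ?thesis by (simp add: dpart_xi_component symb_zero)
  qed
qed

lemma iter_part_xi_slice:
  fixes f :: "('n::finite) pt \<Rightarrow> real"
  shows "iter_part vs (\<lambda>\<xi>. f (u, \<xi>)) = (\<lambda>\<xi>. iter_part (map (Pair 0) vs) f (u, \<xi>))"
proof (induction vs)
  case (Cons e vs)
  have "(u, \<xi> + t *\<^sub>R e) = (u, \<xi>) + t *\<^sub>R (0, e)" for \<xi> and t :: real
    by simp
  then show ?case
    by (simp only: iter_part.simps list.map Cons dpart_def)
qed simp

lemma smooth_fun_xi_slice:
  fixes f :: "('n::finite) pt \<Rightarrow> real"
  assumes "smooth_fun f"
  shows "smooth_fun (\<lambda>\<xi>. f (u, \<xi>))"
  unfolding smooth_fun_def
proof (intro allI impI)
  fix vs :: "(real^'n) list" and \<xi>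
  assume "set vs \<subseteq> Basis"
  then have "set (map (Pair 0) vs) \<subseteq> (Basis :: 'n pt set)"
    by (auto simp: Basis_prod_def)
  then have f: "iter_part (map (Pair 0) vs) f differentiable (at (u, \<xi>))"
    using assms unfolding smooth_fun_def by blast
  have "Pair u differentiable (at \<xi>)"
    by (auto intro!: derivative_eq_intros simp: differentiable_def)
  from differentiable_chain_at[OF this f]
  show "iter_part vs (\<lambda>\<xi>. f (u, \<xi>)) differentiable (at \<xi>)"
    unfolding iter_part_xi_slice by (simp add: o_def)
qed

lemma powr_le_if_comparable:
  fixes x y K m :: real
  assumes "0 < x" "0 < y" "x \<le> K * y" "y \<le> K * x"
  shows "x powr m \<le> K powr \<bar>m\<bar> * y powr m"
proof -
  have "0 < K * y"
    using assms(1,3) by linarith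
  then have "0 < K"
    using assms(2) by (simp add: zero_less_mult_iff)
  show ?thesis
  proof (cases "0 \<le> m")
    case True
    have "x powr m \<le> (K * y) powr m"
      by (rule powr_mono2) (use assms True in auto)
    then show ?thesis
      using assms True \<open>0 < K\<close> by (simp add: powr_mult)
  next
    case False
    have "y / K \<le> x"
      using assms \<open>0 < K\<close> by (simp add: field_simps)
    then have "x powr m \<le> (y / K) powr m"
      using powr_mono2'[of m "y / K" x] assms \<open>0 < K\<close> False by simp
    also have "\<dots> = y powr m / K powr m"
      by (rule powr_divide)
    also have "\<dots> = K powr \<bar>m\<bar> * y powr m"
      using False by (simp add: powr_minus divide_inverse)
    finally show ?thesis .
  qed
qed

lemma symb_compose:
  fixes \<Phi> :: "('n::finite) pt \<Rightarrow> 'n pt"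
  assumes deriv: "\<And>p. (\<Phi> has_derivative M (\<Phi> p)) (at p)"
    and coeff: "\<And>b c. b \<in> Basis \<Longrightarrow> c \<in> Basis \<Longrightarrow> symb (xi_weight c - xi_weight b) (\<lambda>q. M q b \<bullet> c)"
    and comparable: "\<And>p. jbr (snd (\<Phi> p)) \<le> K * jbr (snd p)" "\<And>p. jbr (snd p) \<le> K * jbr (snd (\<Phi> p))"
    and "symb m G"
  shows "symb m (\<lambda>p. G (\<Phi> p))"
proof (rule symb_coinduct[where P = "\<lambda>m h. \<exists>G. symb m G \<and> h = (\<lambda>p. G (\<Phi> p))"])
  fix m and h :: "'n pt \<Rightarrow> real"
  assume "\<exists>G. symb m G \<and> h = (\<lambda>p. G (\<Phi> p))"
  then obtain G where G: "symb m G" and h: "h = (\<lambda>p. G (\<Phi> p))"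
    by blast
  have "h differentiable (at p)" for p
  proof -
    have "\<Phi> differentiable (at p)"
      using deriv by (rule differentiableI)
    from differentiable_chain_at[OF this symb_differentiable[OF G]] show ?thesis
      unfolding h by (simp add: o_def)
  qed
  moreover obtain C where "C \<ge> 0" and C: "\<And>q. \<bar>G q\<bar> \<le> C * jbr (snd q) powr m"
    using symb_bounded[OF G] by metis
  have "\<bar>h p\<bar> \<le> (C * K powr \<bar>m\<bar>) * jbr (snd p) powr m" for p
  proof -
    have "\<bar>h p\<bar> \<le> C * jbr (snd (\<Phi> p)) powr m"
      unfolding h by (rule C)
    also have "\<dots> \<le> C * (K powr \<bar>m\<bar> * jbr (snd p) powr m)"
      using powr_le_if_comparable[OF jbr_pos jbr_pos comparable] \<open>C \<ge> 0\<close> by (rule mult_left_mono)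
    finally show ?thesis
      by (simp add: mult.assoc)
  qed
  moreover have "\<exists>G. symb (m - xi_weight b) G \<and> dpart b h = (\<lambda>p. G (\<Phi> p))"
    if b: "b \<in> Basis" for b
  proof (intro exI conjI)
    show "dpart b h = (\<lambda>p. (\<lambda>q. \<Sum>c\<in>Basis. (M q b \<bullet> c) * dpart c G q) (\<Phi> p))"
      unfolding h by (rule ext, rule dpart_compose[OF deriv symb_differentiable[OF G]])
    have "symb (m - xi_weight b) (\<lambda>q. (M q b \<bullet> c) * dpart c G q)" if c: "c \<in> Basis" for c
      using symb_mult[OF coeff[OF b c] symb_dpart[OF G c]] by simp
    then show "symb (m - xi_weight b) (\<lambda>q. \<Sum>c\<in>Basis. (M q b \<bullet> c) * dpart c G q)"
      by (intro symb_sum) auto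
  qed
  ultimately show "(\<forall>p. h differentiable (at p)) \<and> (\<exists>C. \<forall>p. \<bar>h p\<bar> \<le> C * jbr (snd p) powr m)
      \<and> (\<forall>b\<in>Basis. \<exists>G. symb (m - xi_weight b) G \<and> dpart b h = (\<lambda>p. G (\<Phi> p)))"
    by blast
qed (use assms in blast)

section \<open>Perturbations of the identity\<close>

lemma lipschitz_on_minus_id_imp_norm_diff_ge:
  fixes f :: "'a::real_normed_vector \<Rightarrow> 'a"
  assumes "\<delta>-lipschitz_on UNIV (\<lambda>x. f x - x)"
  shows "(1 - \<delta>) * norm (x - y) \<le> norm (f x - f y)"
proof -
  have "norm ((f x - x) - (f y - y)) \<le> \<delta> * norm (x - y)"
    using lipschitz_on_normD[OF assms] by simp
  moreover have "norm (x - y) - norm ((f x - x) - (f y - y)) \<le> norm (f x - f y)"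
    using norm_diff_ineq[of "x - y" "(f x - x) - (f y - y)"] by simp
  ultimately show ?thesis
    by (simp add: algebra_simps)
qed

lemma bij_if_lipschitz_on_minus_id:
  fixes f :: "'a::banach \<Rightarrow> 'a"
  assumes lip: "\<delta>-lipschitz_on UNIV (\<lambda>x. f x - x)" and "\<delta> < 1"
  shows "bij f"
proof (rule bijI)
  show "inj f"
  proof (rule injI)
    fix x y
    assume "f x = f y"
    then have "(1 - \<delta>) * norm (x - y) \<le> 0"
      using lipschitz_on_minus_id_imp_norm_diff_ge[OF lip, of x y] by simp
    with \<open>\<delta> < 1\<close> show "x = y"
      by (simp add: mult_le_0_iff)
  qed
  have "\<exists>\<xi>. f \<xi> = \<eta>" for \<eta>
  proof -
    have "dist (\<eta> - (f x - x)) (\<eta> - (f y - y)) \<le> \<delta> * dist x y" for x y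
    proof -
      have "(\<eta> - (f x - x)) - (\<eta> - (f y - y)) = - ((f x - x) - (f y - y))"
        by (simp add: algebra_simps)
      then have "dist (\<eta> - (f x - x)) (\<eta> - (f y - y)) = norm ((f x - x) - (f y - y))"
        by (simp only: dist_norm norm_minus_cancel)
      also have "\<dots> \<le> \<delta> * norm (x - y)"
        using lipschitz_on_normD[OF lip] by simp
      finally show ?thesis
        by (simp only: dist_norm)
    qed
    then have "\<exists>!\<xi>. \<eta> - (f \<xi> - \<xi>) = \<xi>"
      by (intro banach_fix_type[OF lipschitz_on_nonneg[OF lip] \<open>\<delta> < 1\<close>]) blast
    then obtain \<xi> where "\<eta> - (f \<xi> - \<xi>) = \<xi>"
      by blast
    then show ?thesis
      by (auto simp: algebra_simps)
  qed
  then show "surj f"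
    by (metis surjI)
qed

lemma norm_transpose_mult_le:
  fixes H :: "real^'n^'m"
  assumes "0 \<le> \<delta>" "\<And>v. norm (H *v v) \<le> \<delta> * norm v"
  shows "norm (transpose H *v x) \<le> \<delta> * norm x"
proof -
  define y where "y = transpose H *v x"
  have "y = x v* H"
    using vector_transpose_matrix[of x "transpose H"] by (simp add: y_def)
  then have "norm y ^ 2 = (x v* H) \<bullet> y"
    by (simp add: power2_norm_eq_inner)
  also have "\<dots> = x \<bullet> (H *v y)"
    by (rule dot_lmul_matrix)
  also have "\<dots> \<le> norm x * norm (H *v y)"
    by (rule norm_cauchy_schwarz)
  also have "\<dots> \<le> norm x * (\<delta> * norm y)"
    by (rule mult_left_mono[OF assms(2)]) simp
  finally have "norm y * norm y \<le> (\<delta> * norm x) * norm y"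
    by (simp add: power2_eq_square algebra_simps)
  then show ?thesis
    unfolding y_def[symmetric] using assms(1) by (cases "norm y = 0") auto
qed

lemma invertible_if_norm_mult_ge:
  fixes M :: "real^'n^'n"
  assumes "c > 0" "\<And>x. c * norm x \<le> norm (M *v x)"
  shows "invertible M"
  unfolding invertible_left_inverse matrix_left_invertible_injective
proof (rule injI)
  fix x y
  assume "M *v x = M *v y"
  then have "c * norm (x - y) \<le> 0"
    using assms(2)[of "x - y"] by (simp add: matrix_vector_mult_diff_distrib)
  with \<open>c > 0\<close> show "x = y"
    by (simp add: mult_le_0_iff)
qed

lemma matrix_inv_right:
  fixes M :: "'a::semiring_1^'n^'n"
  assumes "invertible M"
  shows "M ** matrix_inv M = mat 1"
  using someI_ex[OF assms[unfolded invertible_def]] by (simp add: matrix_inv_def)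

lemma matrix_inv_cramer:
  fixes M :: "real^'n^'n"
  assumes "invertible M"
  shows "matrix_inv M $ i $ j = det (\<chi> r s. if s = i then axis j 1 $ r else M $ r $ s) / det M"
proof -
  have "M *v (matrix_inv M *v axis j 1) = axis j 1"
    by (simp add: matrix_vector_mul_assoc matrix_inv_right[OF assms])
  then have "matrix_inv M *v axis j 1 = (\<chi> k. det (\<chi> r s. if s = k then axis j 1 $ r else M $ r $ s) / det M)"
    using cramer invertible_det_nz assms by blast
  then show ?thesis
    by (simp add: matrix_vector_mult_basis column_def vec_eq_iff)
qed

lemma det_matrix_inv:
  fixes M :: "real^'n^'n"
  assumes "invertible M"
  shows "det (matrix_inv M) = inverse (det M)"
  using det_mul[of M "matrix_inv M"] invertible_det_nz[of M] assms
  by (simp add: matrix_inv_right field_simps)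

lemma abs_matrix_inv_le:
  fixes M :: "real^'n^'n"
  assumes "c > 0" "\<And>x. c * norm x \<le> norm (M *v x)"
  shows "\<bar>matrix_inv M $ i $ j\<bar> \<le> inverse c"
proof -
  have inv: "invertible M"
    using invertible_if_norm_mult_ge assms by blast
  have "\<bar>matrix_inv M $ i $ j\<bar> = \<bar>(matrix_inv M *v axis j 1) $ i\<bar>"
    by (simp add: matrix_vector_mult_basis column_def)
  also have "\<dots> \<le> norm (matrix_inv M *v axis j 1)"
    by (rule component_le_norm_cart)
  also have "c * \<dots> \<le> norm (axis j (1::real))"
    using assms(2)[of "matrix_inv M *v axis j 1"]
    by (simp add: matrix_vector_mul_assoc matrix_inv_right[OF inv])
  finally show ?thesis
    using \<open>c > 0\<close> by (simp add: field_simps)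
qed

lemma abs_det_le:
  fixes M :: "real^'n^'n"
  assumes "\<And>i j. \<bar>M $ i $ j\<bar> \<le> B"
  shows "\<bar>det M\<bar> \<le> fact CARD('n) * B ^ CARD('n)"
proof -
  have "\<bar>det M\<bar> \<le> (\<Sum>p\<in>{p. p permutes (UNIV::'n set)}. \<bar>of_int (sign p) * (\<Prod>i\<in>UNIV. M $ i $ p i)\<bar>)"
    unfolding det_def by (rule sum_abs)
  also have "\<dots> \<le> (\<Sum>p\<in>{p. p permutes (UNIV::'n set)}. B ^ CARD('n))"
  proof (rule sum_mono)
    fix p :: "'n \<Rightarrow> 'n"
    have "\<bar>of_int (sign p) * (\<Prod>i\<in>UNIV. M $ i $ p i)\<bar> = (\<Prod>i\<in>UNIV. \<bar>M $ i $ p i\<bar>)"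
      by (simp add: abs_mult abs_prod flip: of_int_abs)
    also have "\<dots> \<le> (\<Prod>i\<in>(UNIV::'n set). B)"
      by (rule prod_mono) (simp add: assms)
    finally show "\<bar>of_int (sign p) * (\<Prod>i\<in>UNIV. M $ i $ p i)\<bar> \<le> B ^ CARD('n)"
      by simp
  qed
  also have "\<dots> = fact CARD('n) * B ^ CARD('n)"
    by (simp add: card_permutations)
  finally show ?thesis .
qed

section \<open>The map \<open>\<Lambda>\<close> and its inverse\<close>

locale small_mixed_hessian =
  fixes a :: "('n::finite) pt \<Rightarrow> real" and \<delta> :: real
  assumes dy_symb: "\<And>j. symb 1 (dy j a)"
    and delta: "0 \<le> \<delta>" "\<delta> < 1"
    and hess: "\<And>p. onorm (\<lambda>v. hess_xi_y a p *v v) \<le> \<delta>"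
begin

lemma symb_Lam: "symb 1 (\<lambda>p. Lam a p $ k)"
  unfolding Lam_def using symb_add[OF symb_xi_component dy_symb] by simp

definition DLam :: "'n pt \<Rightarrow> 'n pt \<Rightarrow> real^'n" where
  "DLam q = frechet_derivative (Lam a) (at q)"

lemma has_derivative_Lam: "(Lam a has_derivative DLam q) (at q)"
proof -
  have "((\<lambda>q. Lam a q $ l) has_derivative frechet_derivative (\<lambda>q. Lam a q $ l) (at q)) (at q)" for l
    using symb_differentiable[OF symb_Lam] frechet_derivative_works by blast
  then have "((\<lambda>q. \<chi> l. Lam a q $ l) has_derivative
      (\<lambda>v. \<chi> l. frechet_derivative (\<lambda>q. Lam a q $ l) (at q) v)) (at q)"
    by (rule has_derivative_vec_lambda)
  then have "Lam a differentiable (at q)"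
    unfolding vec_lambda_eta by (rule differentiableI)
  then show ?thesis
    unfolding DLam_def frechet_derivative_works .
qed

lemma dpart_Lam: "dpart v (\<lambda>q. Lam a q $ l) = (\<lambda>q. DLam q v $ l)"
  by (rule ext dpart_eq_derivative[OF bounded_linear.has_derivative[OF bounded_linear_vec_nth
        has_derivative_Lam]])+

lemma linear_DLam: "linear (DLam q)"
  using has_derivative_Lam has_derivative_linear by blast

definition J :: "'n pt \<Rightarrow> real^'n^'n" where
  "J q = matrix (\<lambda>z. DLam q (0, z))"

lemma J_mult: "J q *v z = DLam q (0, z)"
proof -
  have "linear (\<lambda>z::real^'n. DLam q (0, z))"
    by (intro linear_compose[OF _ linear_DLam, unfolded o_def] bounded_linear.linear
        bounded_linear_Pair bounded_linear_zero bounded_linear_ident)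
  then show ?thesis
    unfolding J_def by (metis matrix_vector_mul(2))
qed

lemma DLam_Pair: "DLam q (u, z) = DLam q (u, 0) + J q *v z"
  using linear_add[OF linear_DLam, of q "(u, 0)" "(0, z)"] by (simp add: J_mult)

lemma J_component: "J q $ l $ j = dxi j (\<lambda>p. Lam a p $ l) q"
  by (simp add: J_def matrix_def dxi_def dpart_Lam zero_prod_def)

lemma J_eq: "J q = mat 1 + transpose (hess_xi_y a q)"
proof -
  have "J q $ l $ j = (if l = j then 1 else 0) + hess_xi_y a q $ j $ l" for l j
  proof -
    have "J q $ l $ j = dxi j (\<lambda>p. snd p $ l) q + dxi j (dy l a) q"
      unfolding J_component Lam_def dxi_def
      using dpart_add[OF symb_differentiable[OF symb_xi_component] symb_differentiable[OF dy_symb]]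
      by simp
    also have "dxi j (\<lambda>p. snd p $ l) q = (if l = j then 1 else 0)"
      by (simp add: dxi_def dpart_xi_component axis_def)
    finally show ?thesis
      by (simp add: hess_xi_y_def)
  qed
  then show ?thesis
    by (simp add: vec_eq_iff mat_def transpose_def)
qed

lemma norm_transpose_hess_le: "norm (transpose (hess_xi_y a q) *v z) \<le> \<delta> * norm z"
proof (rule norm_transpose_mult_le[OF delta(1)])
  fix v
  show "norm (hess_xi_y a q *v v) \<le> \<delta> * norm v"
    using onorm[OF matrix_vector_mul_bounded_linear, of "hess_xi_y a q" v] hess[of q]
    by (meson mult_right_mono norm_ge_zero order_trans)
qed

lemma J_mult_minus_id: "J q *v z - z = transpose (hess_xi_y a q) *v z"
  by (simp add: J_eq matrix_vector_mult_add_rdistrib)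

lemma norm_J_mult_ge: "(1 - \<delta>) * norm z \<le> norm (J q *v z)"
proof -
  have "dist (J q *v x - x) (J q *v y - y) \<le> \<delta> * dist x y" for x y
  proof -
    have "(J q *v x - x) - (J q *v y - y) = transpose (hess_xi_y a q) *v (x - y)"
      by (simp only: J_mult_minus_id matrix_vector_mult_diff_distrib)
    then show ?thesis
      using norm_transpose_hess_le[of q "x - y"] by (simp only: dist_norm)
  qed
  then have "\<delta>-lipschitz_on UNIV (\<lambda>z. J q *v z - z)"
    using delta(1) by (intro lipschitz_onI)
  from lipschitz_on_minus_id_imp_norm_diff_ge[OF this, of z 0] show ?thesis
    by simp
qed

lemma invertible_J: "invertible (J q)"
  by (intro invertible_if_norm_mult_ge[of "1 - \<delta>"] norm_J_mult_ge) (use delta in simp)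

lemma xi_direction_in_Basis: "((0, 0), axis j 1) \<in> (Basis :: 'n pt set)"
  by (auto simp: Basis_prod_def zero_prod_def[symmetric])

lemma symb_J: "symb 0 (\<lambda>q. J q $ l $ j)"
  using symb_dpart[OF symb_Lam[of l] xi_direction_in_Basis[of j]]
  by (simp add: J_component dxi_def xi_weight_def zero_prod_def)

lemma abs_matrix_inv_J_le: "\<bar>matrix_inv (J q) $ i $ j\<bar> \<le> inverse (1 - \<delta>)"
  by (rule abs_matrix_inv_le[OF _ norm_J_mult_ge]) (use delta in simp)

lemma abs_det_J_ge: "inverse (fact CARD('n) * inverse (1 - \<delta>) ^ CARD('n)) \<le> \<bar>det (J q)\<bar>"
proof -
  have "\<bar>inverse (det (J q))\<bar> \<le> fact CARD('n) * inverse (1 - \<delta>) ^ CARD('n)"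
    using abs_det_le[OF abs_matrix_inv_J_le] by (simp add: det_matrix_inv[OF invertible_J])
  moreover have "det (J q) \<noteq> 0"
    using invertible_J invertible_det_nz by blast
  ultimately show ?thesis
    by (metis abs_inverse inverse_le_imp_le inverse_inverse_eq zero_less_abs_iff)
qed

lemma symb_inverse_det_J: "symb 0 (\<lambda>q. inverse (det (J q)))"
  by (rule symb_inverse[OF symb_det[OF symb_J] _ abs_det_J_ge]) (use delta in simp)

lemma symb_matrix_inv_J: "symb 0 (\<lambda>q. matrix_inv (J q) $ i $ j)"
proof -
  have "symb 0 (\<lambda>q. det (\<chi> r s. if s = i then axis j 1 $ r else J q $ r $ s))"
  proof (rule symb_det)
    fix r s
    show "symb 0 (\<lambda>q. (\<chi> r s. if s = i then axis j 1 $ r else J q $ r $ s) $ r $ s)"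
      by (cases "s = i") (simp_all add: symb_J symb_const)
  qed
  from symb_mult[OF this symb_inverse_det_J] show ?thesis
    by (simp add: matrix_inv_cramer[OF invertible_J] divide_inverse)
qed

lemma has_derivative_Lam_xi: "((\<lambda>\<xi>. Lam a (u, \<xi>)) has_derivative (\<lambda>v. J (u, \<xi>) *v v)) (at \<xi>)"
proof -
  have "((\<lambda>\<xi>. (u, \<xi>)) has_derivative (\<lambda>v. (0, v))) (at \<xi>)"
    by (auto intro!: derivative_eq_intros)
  from has_derivative_compose[OF this has_derivative_Lam] show ?thesis
    by (simp add: J_mult)
qed

lemma lipschitz_Lam_minus_id: "\<delta>-lipschitz_on UNIV (\<lambda>\<xi>. Lam a (u, \<xi>) - \<xi>)"
proof (rule lipschitz_onI)
  fix x y :: "real^'n"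
  have "norm ((Lam a (u, x) - x) - (Lam a (u, y) - y)) \<le> \<delta> * norm (x - y)"
  proof (rule differentiable_bound[where S = UNIV and f' = "\<lambda>\<xi> v. J (u, \<xi>) *v v - v"])
    show "((\<lambda>\<xi>. Lam a (u, \<xi>) - \<xi>) has_derivative (\<lambda>v. J (u, \<xi>) *v v - v)) (at \<xi> within UNIV)" for \<xi>
      by (intro has_derivative_diff has_derivative_Lam_xi has_derivative_ident)
    show "onorm (\<lambda>v. J (u, \<xi>) *v v - v) \<le> \<delta>" for \<xi>
      by (rule onorm_le) (simp only: J_mult_minus_id norm_transpose_hess_le)
  qed auto
  then show "dist (Lam a (u, x) - x) (Lam a (u, y) - y) \<le> \<delta> * dist x y"
    by (simp add: dist_norm)
qed (use delta in simp)

lemma bij_Lam: "bij (\<lambda>\<xi>. Lam a (u, \<xi>))"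
  by (rule bij_if_lipschitz_on_minus_id[OF lipschitz_Lam_minus_id delta(2)])

lemma Lam_lam: "Lam a (fst p, lam a p) = snd p"
  unfolding lam_def using bij_inv_eq_iff[OF bij_Lam] by metis

lemma lam_Lam: "lam a (u, Lam a (u, \<xi>)) = \<xi>"
  unfolding lam_def by (simp add: inv_f_f[OF bij_is_inj[OF bij_Lam]])

lemma norm_Lam_minus_xi_le:
  obtains C where "C \<ge> 0" "\<And>p. norm (Lam a p - snd p) \<le> C * jbr (snd p)"
proof -
  have "\<exists>C. C \<ge> 0 \<and> (\<forall>p. \<bar>dy k a p\<bar> \<le> C * jbr (snd p))" for k
  proof -
    obtain C where "C \<ge> 0" "\<And>p. \<bar>dy k a p\<bar> \<le> C * jbr (snd p) powr 1"
      using symb_bounded[OF dy_symb[of k]] by blast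
    moreover have "jbr v powr 1 = jbr v" for v :: "real^'n"
      using jbr_pos[of v] by simp
    ultimately show ?thesis
      by auto
  qed
  then have "\<exists>C. \<forall>k. C k \<ge> 0 \<and> (\<forall>p. \<bar>dy k a p\<bar> \<le> C k * jbr (snd p))"
    by (rule choice[OF allI])
  then obtain C where C: "\<And>k. C k \<ge> 0" "\<And>k p. \<bar>dy k a p\<bar> \<le> C k * jbr (snd p)"
    by blast
  have "norm (Lam a p - snd p) \<le> (\<Sum>k\<in>UNIV. C k) * jbr (snd p)" for p
  proof -
    have "norm (Lam a p - snd p) \<le> (\<Sum>k\<in>UNIV. \<bar>dy k a p\<bar>)"
      using norm_le_l1_cart[of "\<chi> k. dy k a p"] by (simp add: Lam_def)
    also have "\<dots> \<le> (\<Sum>k\<in>UNIV. C k * jbr (snd p))"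
      by (rule sum_mono) (rule C(2))
    finally show ?thesis
      by (simp add: sum_distrib_right)
  qed
  moreover have "(\<Sum>k\<in>UNIV. C k) \<ge> 0"
    using C(1) by (simp add: sum_nonneg)
  ultimately show thesis
    using that by blast
qed

lemma jbr_Lam_le:
  obtains K where "K > 0" "\<And>u \<xi>. jbr (Lam a (u, \<xi>)) \<le> K * jbr \<xi>"
proof -
  obtain C where "C \<ge> 0" and C: "\<And>p. norm (Lam a p - snd p) \<le> C * jbr (snd p)"
    using norm_Lam_minus_xi_le by metis
  have "jbr (Lam a (u, \<xi>)) \<le> (2 + C) * jbr \<xi>" for u \<xi>
  proof -
    have "norm (Lam a (u, \<xi>)) \<le> norm \<xi> + C * jbr \<xi>"
      using C[of "(u, \<xi>)"] norm_triangle_sub[of "Lam a (u, \<xi>)" \<xi>] by simp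
    then show ?thesis
      using jbr_le_1_plus_norm[of "Lam a (u, \<xi>)"] jbr_ge_1[of \<xi>] norm_le_jbr[of \<xi>]
      by (simp add: algebra_simps)
  qed
  then show thesis
    using that[of "2 + C"] \<open>C \<ge> 0\<close> by simp
qed

text \<open>The lower bound comes from the Lipschitz inverse:
  \<open>(1 - \<delta>) |\<xi>| \<le> |\<Lambda>(x, y, \<xi>) - \<Lambda>(x, y, 0)|\<close>.\<close>

lemma jbr_le_jbr_Lam:
  obtains K where "K > 0" "\<And>u \<xi>. jbr \<xi> \<le> K * jbr (Lam a (u, \<xi>))"
proof -
  obtain C where "C \<ge> 0" and C: "\<And>p. norm (Lam a p - snd p) \<le> C * jbr (snd p)"
    using norm_Lam_minus_xi_le by metis
  define K where "K = 1 + (1 + C) / (1 - \<delta>)"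
  have "jbr \<xi> \<le> K * jbr (Lam a (u, \<xi>))" for u \<xi>
  proof -
    define t where "t = jbr (Lam a (u, \<xi>))"
    have "1 \<le> t"
      unfolding t_def by (rule jbr_ge_1)
    have "norm (Lam a (u, 0)) \<le> C"
      using C[of "(u, 0)"] by (simp add: jbr_def)
    then have "(1 - \<delta>) * norm \<xi> \<le> t + C"
      using lipschitz_on_minus_id_imp_norm_diff_ge[OF lipschitz_Lam_minus_id[of u], of \<xi> 0]
        norm_triangle_ineq4[of "Lam a (u, \<xi>)" "Lam a (u, 0)"] norm_le_jbr[of "Lam a (u, \<xi>)"]
      unfolding t_def by simp
    also have "\<dots> \<le> (1 + C) * t"
      using mult_left_mono[OF \<open>1 \<le> t\<close> \<open>C \<ge> 0\<close>] by (simp add: algebra_simps)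
    finally have "norm \<xi> \<le> (1 + C) / (1 - \<delta>) * t"
      using delta by (simp add: field_simps)
    then show ?thesis
      using jbr_le_1_plus_norm[of \<xi>] \<open>1 \<le> t\<close> unfolding K_def t_def by (simp add: algebra_simps)
  qed
  moreover have "K > 0"
    unfolding K_def using \<open>C \<ge> 0\<close> delta by (simp add: add_pos_nonneg)
  ultimately show thesis
    using that by blast
qed

lemma jbr_Lam_lam_comparable:
  obtains K where "K > 0"
    "\<And>u \<xi>. jbr (Lam a (u, \<xi>)) \<le> K * jbr \<xi>" "\<And>u \<xi>. jbr \<xi> \<le> K * jbr (Lam a (u, \<xi>))"
    "\<And>u \<eta>. jbr (lam a (u, \<eta>)) \<le> K * jbr \<eta>" "\<And>u \<eta>. jbr \<eta> \<le> K * jbr (lam a (u, \<eta>))"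
proof -
  obtain K1 K2 where "K1 > 0" "K2 > 0" and upper: "\<And>u \<xi>. jbr (Lam a (u, \<xi>)) \<le> K1 * jbr \<xi>"
    and lower: "\<And>u \<xi>. jbr \<xi> \<le> K2 * jbr (Lam a (u, \<xi>))"
    using jbr_Lam_le jbr_le_jbr_Lam by metis
  have upper': "jbr (Lam a (u, \<xi>)) \<le> max K1 K2 * jbr \<xi>" for u \<xi>
    using upper[of u \<xi>] mult_right_mono[OF max.cobounded1 less_imp_le[OF jbr_pos]] by (rule order_trans)
  have lower': "jbr \<xi> \<le> max K1 K2 * jbr (Lam a (u, \<xi>))" for u \<xi>
    using lower[of \<xi> u] mult_right_mono[OF max.cobounded2 less_imp_le[OF jbr_pos]] by (rule order_trans)
  show thesis
  proof (rule that[OF _ upper' lower'])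
    show "max K1 K2 > 0"
      using \<open>K1 > 0\<close> by simp
    show "jbr (lam a (u, \<eta>)) \<le> max K1 K2 * jbr \<eta>" "jbr \<eta> \<le> max K1 K2 * jbr (lam a (u, \<eta>))" for u \<eta>
      using lower'[where u = u and \<xi> = "lam a (u, \<eta>)"] upper'[where u = u and \<xi> = "lam a (u, \<eta>)"]
        Lam_lam[of "(u, \<eta>)"] by simp_all
  qed
qed

text \<open>\<open>\<Phi>\<close> inverts \<open>(x, y, \<xi>) \<mapsto> (x, y, \<Lambda>(x, y, \<xi>))\<close>; its derivative at \<open>p\<close> is \<open>DPhi (\<Phi> p)\<close>,
  which inverts the block-triangular derivative \<open>(v, w) \<mapsto> (v, DLam q (v, w))\<close>.\<close>

definition Phi :: "'n pt \<Rightarrow> 'n pt" where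
  "Phi p = (fst p, lam a p)"

definition DPhi :: "'n pt \<Rightarrow> 'n pt \<Rightarrow> 'n pt" where
  "DPhi q w = (fst w, matrix_inv (J q) *v (snd w - DLam q (fst w, 0)))"

lemma has_derivative_Phi: "(Phi has_derivative DPhi (Phi p)) (at p)"
proof -
  let ?F = "\<lambda>q. (fst q, Lam a q)" and ?F' = "\<lambda>q v. (fst v, DLam q v)"
  have F: "(?F has_derivative ?F' q) (at q)" for q
    by (intro has_derivative_Pair has_derivative_fst has_derivative_ident has_derivative_Lam)
  have Phi_F: "Phi (?F q) = q" for q
    by (cases q) (simp add: Phi_def lam_Lam)
  have F'_DPhi: "?F' q \<circ> DPhi q = id" for q
  proof (rule ext)
    fix w :: "'n pt"
    have "DLam q (fst w, matrix_inv (J q) *v (snd w - DLam q (fst w, 0))) = snd w"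
      by (subst DLam_Pair) (simp add: matrix_vector_mul_assoc matrix_inv_right[OF invertible_J])
    then show "(?F' q \<circ> DPhi q) w = id w"
      by (simp add: DPhi_def)
  qed
  have "(Phi has_derivative DPhi (Phi p)) (at (?F (Phi p)))"
    by (rule has_derivative_inverse_on[where S = UNIV and f' = ?F'])
      (simp_all only: F Phi_F F'_DPhi open_UNIV UNIV_I)
  then show ?thesis
    by (simp add: Phi_def Lam_lam)
qed

lemma symb_DPhi_coefficient:
  assumes b: "b \<in> Basis" and c: "c \<in> Basis"
  shows "symb (xi_weight c - xi_weight b) (\<lambda>q. DPhi q b \<bullet> c)"
  using c
proof (cases rule: pt_Basis_cases)
  case (xy cu)
  then have coeff: "(\<lambda>q. DPhi q b \<bullet> c) = (\<lambda>q. fst b \<bullet> cu)"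
    by (simp add: DPhi_def)
  from b show ?thesis
  proof (cases rule: pt_Basis_cases)
    case (xy bu)
    then show ?thesis
      unfolding coeff using \<open>cu \<in> Basis\<close> \<open>c = (cu, 0)\<close> by (simp add: xi_weight_xy symb_const)
  next
    case (xi j)
    then show ?thesis
      unfolding coeff by (simp add: symb_zero)
  qed
next
  case (xi i)
  then have coeff: "(\<lambda>q. DPhi q b \<bullet> c) = (\<lambda>q. (matrix_inv (J q) *v (snd b - DLam q (fst b, 0))) $ i)"
    by (simp add: DPhi_def inner_axis)
  from b show ?thesis
  proof (cases rule: pt_Basis_cases)
    case (xy bu)
    have "symb 1 (\<lambda>q. DLam q (bu, 0) $ l)" for l
      using symb_dpart[OF symb_Lam[of l] b] by (simp add: xy xi_weight_xy dpart_Lam)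
    then have "symb (0 + 1) (\<lambda>q. matrix_inv (J q) $ i $ l * DLam q (bu, 0) $ l)" for l
      by (rule symb_mult[OF symb_matrix_inv_J])
    then have "symb 1 (\<lambda>q. \<Sum>l\<in>UNIV. matrix_inv (J q) $ i $ l * DLam q (bu, 0) $ l)"
      by (intro symb_sum) auto
    from symb_scale[OF this, of "-1"]
    have "symb 1 (\<lambda>q. - (\<Sum>l\<in>UNIV. matrix_inv (J q) $ i $ l * DLam q (bu, 0) $ l))"
      by simp
    then show ?thesis
      unfolding coeff by (simp add: xy xi xi_weight_xy xi_weight_xi matrix_vector_mult_def sum_negf)
  next
    case (xi j)
    have "DLam q (0, 0) = 0" for q
      using linear_0[OF linear_DLam] by (simp add: zero_prod_def)
    then show ?thesis
      unfolding coeff by (simp add: xi \<open>c = (0, axis i 1)\<close> xi_weight_xi symb_matrix_inv_J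
          matrix_vector_mult_basis column_def)
  qed
qed

lemma symb_compose_Phi:
  assumes "symb m G"
  shows "symb m (\<lambda>p. G (Phi p))"
proof -
  obtain K where "K > 0"
    "\<And>u \<xi>. jbr (Lam a (u, \<xi>)) \<le> K * jbr \<xi>" "\<And>u \<xi>. jbr \<xi> \<le> K * jbr (Lam a (u, \<xi>))"
    and lam_bounds: "\<And>u \<eta>. jbr (lam a (u, \<eta>)) \<le> K * jbr \<eta>" "\<And>u \<eta>. jbr \<eta> \<le> K * jbr (lam a (u, \<eta>))"
    using jbr_Lam_lam_comparable by blast
  have "jbr (snd (Phi p)) \<le> K * jbr (snd p)" "jbr (snd p) \<le> K * jbr (snd (Phi p))" for p
    using lam_bounds[where u = "fst p" and \<eta> = "snd p"] by (simp_all add: Phi_def)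
  from symb_compose[OF has_derivative_Phi symb_DPhi_coefficient this assms] show ?thesis .
qed

lemma symb_lam: "symb 1 (\<lambda>p. lam a p $ k)"
  using symb_compose_Phi[OF symb_xi_component[of k]] by (simp add: Phi_def)

lemma jac_lam_eq: "jac_lam a p = det (matrix_inv (J (Phi p)))"
proof -
  have "dxi j (\<lambda>q. lam a q $ i) p = matrix_inv (J (Phi p)) $ i $ j" for i j
  proof -
    have "((\<lambda>q. snd (Phi q) $ i) has_derivative (\<lambda>v. snd (DPhi (Phi p) v) $ i)) (at p)"
      using has_derivative_compose[OF has_derivative_Phi bounded_linear_imp_has_derivative[OF
          bounded_linear_compose[OF bounded_linear_vec_nth bounded_linear_snd]]] .
    from dpart_eq_derivative[OF this, of "((0, 0), axis j 1)"]
    show ?thesis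
      using linear_0[OF linear_DLam] by (simp add: dxi_def Phi_def DPhi_def zero_prod_def
          matrix_vector_mult_basis column_def)
  qed
  then show ?thesis
    by (simp add: jac_lam_def vec_eq_iff)
qed

lemma symb_jac_lam: "symb 0 (jac_lam a)"
proof -
  have "jac_lam a = (\<lambda>p. det (matrix_inv (J (Phi p))))"
    using jac_lam_eq by blast
  then show ?thesis
    using symb_compose_Phi[OF symb_det[OF symb_matrix_inv_J]] by simp
qed

end

theorem lemma1p5:
  fixes a :: "('n::finite) pt \<Rightarrow> real" and \<delta> :: real
  assumes smooth: "smooth_fun a"
    and dy_symb: "\<And>j. symb 1 (dy j a)"
    and delta: "0 \<le> \<delta>" "\<delta> < 1"
    and hess: "\<And>p. onorm (\<lambda>v. hess_xi_y a p *v v) \<le> \<delta>"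
  shows "(\<forall>k. symb 1 (\<lambda>p. Lam a p $ k))
    \<and> (\<forall>u. smooth_diffeo (\<lambda>xi. Lam a (u, xi)))
    \<and> (\<exists>C>0. \<forall>u xi. inverse C * jbr xi \<le> jbr (Lam a (u, xi)) \<and> jbr (Lam a (u, xi)) \<le> C * jbr xi
                     \<and> inverse C * jbr xi \<le> jbr (lam a (u, xi)) \<and> jbr (lam a (u, xi)) \<le> C * jbr xi)
    \<and> (\<forall>k. symb 1 (\<lambda>p. lam a p $ k))
    \<and> symb 0 (jac_lam a)"
proof -
  interpret small_mixed_hessian a \<delta>
    using dy_symb delta hess by unfold_locales
  have "smooth_diffeo (\<lambda>xi. Lam a (u, xi))" for u
    unfolding smooth_diffeo_def smooth_map_def
  proof (intro conjI allI bij_Lam)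
    fix k
    show "smooth_fun (\<lambda>\<xi>. Lam a (u, \<xi>) $ k)"
      using smooth_fun_xi_slice symb_Lam[of k] unfolding symb_def by blast
    show "smooth_fun (\<lambda>\<eta>. inv (\<lambda>\<xi>. Lam a (u, \<xi>)) \<eta> $ k)"
      using smooth_fun_xi_slice[of "\<lambda>p. lam a p $ k" u] symb_lam[of k]
      unfolding symb_def lam_def by simp
  qed
  moreover obtain K where "K > 0"
    "\<And>u \<xi>. jbr (Lam a (u, \<xi>)) \<le> K * jbr \<xi>" "\<And>u \<xi>. jbr \<xi> \<le> K * jbr (Lam a (u, \<xi>))"
    "\<And>u \<eta>. jbr (lam a (u, \<eta>)) \<le> K * jbr \<eta>" "\<And>u \<eta>. jbr \<eta> \<le> K * jbr (lam a (u, \<eta>))"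
    using jbr_Lam_lam_comparable by blast
  then have "\<exists>C>0. \<forall>u xi. inverse C * jbr xi \<le> jbr (Lam a (u, xi)) \<and> jbr (Lam a (u, xi)) \<le> C * jbr xi
      \<and> inverse C * jbr xi \<le> jbr (lam a (u, xi)) \<and> jbr (lam a (u, xi)) \<le> C * jbr xi"
    by (intro exI[of _ K]) (simp add: field_simps)
  ultimately show ?thesis
    using symb_Lam symb_lam symb_jac_lam by blast
qed

end
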